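(* Let $S=s_1,\ldots,s_n$ be a sequence of positive real numbers with mean $\mu=\frac1n\sum_is_i$, let $\alpha>1$, $\gamma>0$, and let $k$ be a positive integer. If $(L,\beta)$ is an optimal solution of $\textsc{Exp}(\alpha)$ for $S,\alpha,\gamma,k$, then \[ \frac{1}{\alpha^k\mu}\le\beta\le\frac1\mu. \]
   Context: A level sequence is $L=\ell_1,\ldots,\ell_n$ of integers with $0\le\ell_i\le k$; set $\ell_0=0$. The penalty is $\mathrm{pen}(x,y)=\max(y-x,0)\,\gamma\log n$; $p_{\exp}(s;\lambda)=\lambda e^{-\lambda s}$; $\mathrm{score}_{\exp}(L,S;\alpha,\beta,\gamma)=\sum_{i=1}^n\big[-\log p_{\exp}(s_i;\beta\alpha^{\ell_i})+\mathrm{pen}(\ell_{i-1},\ell_i)\big]$. Problem $\textsc{Exp}(\alpha)$: given $S,\alpha,\gamma,k$, find $L$ and $\beta>0$ minimizing this score. *)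

theory Defs
  imports Complex_Main
begin

(* Sequences are indexed 1..n: S i = s_i, L i = l_i for 1 <= i <= n; l_0 = 0. *)

definition pen :: "nat \<Rightarrow> real \<Rightarrow> int \<Rightarrow> int \<Rightarrow> real" where
  "pen n \<gamma> x y = max (real_of_int (y - x)) 0 * \<gamma> * ln (real n)"

definition p_exp :: "real \<Rightarrow> real \<Rightarrow> real" where
  "p_exp s lam = lam * exp (- lam * s)"

definition lev :: "(nat \<Rightarrow> int) \<Rightarrow> nat \<Rightarrow> int" where
  "lev L i = (if i = 0 then 0 else L i)"

definition score_exp :: "nat \<Rightarrow> (nat \<Rightarrow> int) \<Rightarrow> (nat \<Rightarrow> real) \<Rightarrow> real \<Rightarrow> real \<Rightarrow> real \<Rightarrow> real" where
  "score_exp n L S \<alpha> \<beta> \<gamma> =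
     (\<Sum>i=1..n. - ln (p_exp (S i) (\<beta> * \<alpha> powr (real_of_int (L i))))
                + pen n \<gamma> (lev L (i - 1)) (lev L i))"

definition level_seq :: "nat \<Rightarrow> nat \<Rightarrow> (nat \<Rightarrow> int) \<Rightarrow> bool" where
  "level_seq n k L \<longleftrightarrow> (\<forall>i\<in>{1..n}. 0 \<le> L i \<and> L i \<le> int k)"

definition optimal_exp :: "nat \<Rightarrow> (nat \<Rightarrow> real) \<Rightarrow> real \<Rightarrow> real \<Rightarrow> nat \<Rightarrow> (nat \<Rightarrow> int) \<Rightarrow> real \<Rightarrow> bool" where
  "optimal_exp n S \<alpha> \<gamma> k L \<beta> \<longleftrightarrow>
     level_seq n k L \<and> \<beta> > 0 \<and>
     (\<forall>L' \<beta>'. level_seq n k L' \<longrightarrow> \<beta>' > 0 \<longrightarrow>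
        score_exp n L S \<alpha> \<beta> \<gamma> \<le> score_exp n L' S \<alpha> \<beta>' \<gamma>)"

end

theory Submission imports Defs begin

text \<open>For fixed levels the score is \<open>C - n ln \<beta> + \<beta> T\<close> with
  \<open>T = \<Sum>\<^sub>i \<alpha>\<^bsup>\<ell>\<^sub>i\<^esup> s\<^sub>i\<close>, a strictly convex function of \<open>\<beta>\<close> minimised
  only at \<open>\<beta> = n / T\<close>. Since \<open>0 \<le> \<ell>\<^sub>i \<le> k\<close>, \<open>T\<close> lies between \<open>n \<mu>\<close> and \<open>\<alpha>\<^sup>k n \<mu>\<close>.\<close>

lemma neg_ln_plus_linear_minimiser_unique:
  fixes a t b :: real
  assumes "a > 0" "t > 0" "b > 0"
    and min: "\<And>c. c > 0 \<Longrightarrow> - a * ln b + b * t \<le> - a * ln c + c * t"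
  shows "b = a / t"
proof -
  define x where "x = b * t / a"
  have x_pos: "x > 0" using assms by (simp add: x_def)
  have "- a * ln b + b * t \<le> - a * ln (a / t) + a"
    using min[of "a / t"] assms by simp
  moreover have "ln b = ln x + ln (a / t)"
    using assms by (simp add: x_def ln_mult ln_div)
  moreover have "b * t = a * x" using assms by (simp add: x_def)
  ultimately have "a * (x - 1) \<le> a * ln x" by (simp add: algebra_simps)
  then have "ln x = x - 1"
    using ln_le_minus_one[OF x_pos] \<open>a > 0\<close> by simp
  then have "x = 1" using ln_eq_minus_one x_pos by blast
  then show ?thesis using assms by (simp add: x_def field_simps)
qed

lemma score_exp_eq:
  fixes \<alpha> b :: real
  assumes "\<alpha> > 0" "b > 0"
  shows "score_exp n L S \<alpha> b \<gamma> =
     (\<Sum>i=1..n. pen n \<gamma> (lev L (i - 1)) (lev L i) - real_of_int (L i) * ln \<alpha>)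
     - real n * ln b + b * (\<Sum>i=1..n. \<alpha> powr real_of_int (L i) * S i)"
proof -
  have "- ln (p_exp (S i) (b * \<alpha> powr real_of_int (L i))) + pen n \<gamma> (lev L (i - 1)) (lev L i)
      = (pen n \<gamma> (lev L (i - 1)) (lev L i) - real_of_int (L i) * ln \<alpha>) - ln b
        + b * (\<alpha> powr real_of_int (L i) * S i)" for i
    using assms by (simp add: p_exp_def ln_mult ln_powr algebra_simps)
  then show ?thesis
    unfolding score_exp_def
    by (simp only:) (simp add: sum.distrib sum_subtractf sum_distrib_left)
qed

lemma optimal_exp_beta_eq:
  assumes "n \<ge> 1" "\<forall>i\<in>{1..n}. S i > 0" "\<alpha> > 0"
    and "optimal_exp n S \<alpha> \<gamma> k L \<beta>"
  shows "\<beta> = real n / (\<Sum>i=1..n. \<alpha> powr real_of_int (L i) * S i)"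
proof (rule neg_ln_plus_linear_minimiser_unique)
  show "real n > 0" using assms(1) by simp
  show "(\<Sum>i=1..n. \<alpha> powr real_of_int (L i) * S i) > 0"
    using assms(1-3) by (intro sum_pos) auto
  show "\<beta> > 0" using assms(4) by (simp add: optimal_exp_def)
  fix c :: real assume "c > 0"
  then have "score_exp n L S \<alpha> \<beta> \<gamma> \<le> score_exp n L S \<alpha> c \<gamma>"
    using assms(4) by (simp add: optimal_exp_def)
  then show "- real n * ln \<beta> + \<beta> * (\<Sum>i=1..n. \<alpha> powr real_of_int (L i) * S i)
      \<le> - real n * ln c + c * (\<Sum>i=1..n. \<alpha> powr real_of_int (L i) * S i)"
    using \<open>c > 0\<close> \<open>\<beta> > 0\<close> assms(3) by (simp add: score_exp_eq)
qed

lemma level_seq_weighted_sum_bounds: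
  fixes \<alpha> :: real
  assumes "level_seq n k L" "\<forall>i\<in>{1..n}. S i \<ge> 0" "\<alpha> \<ge> 1"
  shows "(\<Sum>i=1..n. S i) \<le> (\<Sum>i=1..n. \<alpha> powr real_of_int (L i) * S i)"
    and "(\<Sum>i=1..n. \<alpha> powr real_of_int (L i) * S i) \<le> \<alpha> ^ k * (\<Sum>i=1..n. S i)"
proof -
  have "S i \<le> \<alpha> powr real_of_int (L i) * S i \<and> \<alpha> powr real_of_int (L i) * S i \<le> \<alpha> ^ k * S i"
    if "i \<in> {1..n}" for i
  proof -
    have "0 \<le> L i" "L i \<le> int k" using assms(1) that by (auto simp: level_seq_def)
    then have "\<alpha> powr real_of_int (L i) \<le> \<alpha> powr real k"
      using assms(3) by (intro powr_mono) auto
    then have "1 \<le> \<alpha> powr real_of_int (L i)" "\<alpha> powr real_of_int (L i) \<le> \<alpha> ^ k"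
      using \<open>0 \<le> L i\<close> assms(3) by (simp_all add: ge_one_powr_ge_zero powr_realpow)
    then show ?thesis
      using assms(2) that mult_right_mono[of 1 "\<alpha> powr real_of_int (L i)" "S i"]
      by (auto intro: mult_right_mono)
  qed
  then show "(\<Sum>i=1..n. S i) \<le> (\<Sum>i=1..n. \<alpha> powr real_of_int (L i) * S i)"
    and "(\<Sum>i=1..n. \<alpha> powr real_of_int (L i) * S i) \<le> \<alpha> ^ k * (\<Sum>i=1..n. S i)"
    unfolding sum_distrib_left by (auto intro!: sum_mono)
qed

theorem lemma8:
  fixes n k :: nat and S :: "nat \<Rightarrow> real" and \<alpha> \<gamma> \<beta> :: real and L :: "nat \<Rightarrow> int"
  assumes "n \<ge> 1"
    and "\<forall>i\<in>{1..n}. S i > 0"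
    and "\<alpha> > 1" and "\<gamma> > 0" and "k \<ge> 1"
    and "optimal_exp n S \<alpha> \<gamma> k L \<beta>"
  shows "1 / (\<alpha> ^ k * ((\<Sum>i=1..n. S i) / real n)) \<le> \<beta>
       \<and> \<beta> \<le> 1 / ((\<Sum>i=1..n. S i) / real n)"
proof -
  define U where "U = (\<Sum>i=1..n. S i)"
  define T where "T = (\<Sum>i=1..n. \<alpha> powr real_of_int (L i) * S i)"
  have \<beta>_eq: "\<beta> = real n / T"
    unfolding T_def using assms(1-3,6) by (intro optimal_exp_beta_eq) auto
  have "U \<le> T" "T \<le> \<alpha> ^ k * U"
    unfolding U_def T_def
    using level_seq_weighted_sum_bounds assms(2,3,6) by (auto simp: optimal_exp_def less_imp_le)
  moreover have "U > 0" unfolding U_def using assms(1,2) by (intro sum_pos) auto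
  moreover have "real n > 0" "\<alpha> ^ k > 0" using assms(1,3) by simp_all
  ultimately have "real n / (\<alpha> ^ k * U) \<le> real n / T" "real n / T \<le> real n / U"
    by (auto intro!: divide_left_mono mult_pos_pos)
  then show ?thesis unfolding \<beta>_eq U_def by simp
qed

end
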